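(* Let $n\in\mathbb{N}$ and for $c\in\mathbb{R}$ let $D_{2n}(z;c) = \prod_{j=1}^{2n}[z-(j-1)] + (-1)^n c$, $z\in\mathbb{C}$, with roots $\alpha_1(c),\dots,\alpha_{2n}(c)$ (with multiplicity). Write \[ D_{2n}(z-(1/2);c) = q_{2n}z^{2n}+q_{2n-1}z^{2n-1}+\cdots+q_1 z + [q_0+(-1)^n c], \] so that $q_0 = (4n-1)!!/2^{2n}$. Let $a_k=q_k$ for $1\leq k\leq 2n$, $a_0 = q_0+(-1)^nc$, and $a_k=0$ for $k<0$ or $k>2n$, and let $H_{2n}(c)$ be the $2n\times 2n$ Hurwitz matrix with entries $(H_{2n}(c))_{i,j} = a_{2n-2j+i}$, $1\leq i,j\leq 2n$. Let $h_{n-1}(c)$ be the determinant of the upper-left $(2n-1)\times(2n-1)$ submatrix of $H_{2n}(c)$, so that $\det(H_{2n}(c)) = [q_0+(-1)^nc]\,h_{n-1}(c)$. If $j\in\{1,\dots,2n\}$ and $c\in\mathbb{R}$ are such that $\Re(\alpha_j(c))=-1/2$, then $\det(H_{2n}(c))=0$, that is, $c=(-1)^{n-1}q_0$ or $h_{n-1}(c)=0$.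
   Context: $h_{n-1}$ is a polynomial in $c$ of degree $n-1$ with rational coefficients, and $\det(H_{2n}(\cdot))$ is a polynomial in $c$ of degree $n$. *)

theory Defs
  imports Complex_Main "HOL-Computational_Algebra.Polynomial" "Jordan_Normal_Form.Determinant"
begin

definition Dpoly :: "nat \<Rightarrow> real \<Rightarrow> real poly" where
  "Dpoly n c = (\<Prod>j\<in>{1..2*n}. [:- of_nat (j - 1), 1:]) + [:(-1)^n * c:]"

definition q :: "nat \<Rightarrow> nat \<Rightarrow> real" where
  "q n k = coeff (pcompose (\<Prod>j\<in>{1..2*n}. [:- of_nat (j - 1), 1:]) [:-1/2, 1::real:]) k"

definition a :: "nat \<Rightarrow> real \<Rightarrow> int \<Rightarrow> real" where
  "a n c k = (if k = 0 then q n 0 + (-1)^n * c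
              else if 1 \<le> k \<and> k \<le> 2 * int n then q n (nat k) else 0)"

text \<open>Hurwitz matrix H_{2n}(c), (H)_{i,j} = a_{2n-2j+i} for 1 \<le> i,j \<le> 2n;
  here indices are 0-based, so entry (i,j) is a_{2n-2(j+1)+(i+1)}.\<close>
definition hurwitz :: "nat \<Rightarrow> real \<Rightarrow> real mat" where
  "hurwitz n c = mat (2*n) (2*n)
     (\<lambda>(i,j). a n c (2 * int n - 2 * (int j + 1) + (int i + 1)))"

definition h :: "nat \<Rightarrow> real \<Rightarrow> real" where
  "h n c = det (mat (2*n - 1) (2*n - 1)
     (\<lambda>(i,j). a n c (2 * int n - 2 * (int j + 1) + (int i + 1))))"

end

theory Submission
  imports Defs "Jordan_Normal_Form.Char_Poly"
begin

(* The shift z = x - 1/2 turns the root alpha into a root i y of the real polynomial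
   R(x) = D_2n(x - 1/2; c) = sum a_k x^k.  Separating real and imaginary parts and writing
   w = -y^2 gives sum a_2m w^m = 0 and y sum a_2m+1 w^m = 0.  Every row of the Hurwitz matrix is
   a shifted copy of the even or the odd coefficient sequence, so these two relations say that
   (w^(2n-1), ..., w, 1) is a kernel vector of H_2n(c), whence det H_2n(c) = 0.  The last column
   of H_2n(c) is (0, ..., 0, a_0), and expanding along it gives det H_2n(c) = a_0 h_(n-1)(c). *)

lemma sum_shifted_support:
  fixes g :: "int \<Rightarrow> 'a::comm_semiring_1"
  assumes "\<And>k. k < 0 \<Longrightarrow> g k = 0" and "\<And>k. k > int K \<Longrightarrow> g k = 0" and "t + K < L"
  shows "(\<Sum>j<L. g (int j - int t) * w ^ j) = w ^ t * (\<Sum>m\<le>K. g (int m) * w ^ m)"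
proof -
  have "(\<Sum>j<L. g (int j - int t) * w ^ j) = (\<Sum>j\<in>(\<lambda>m. m + t) ` {..K}. g (int j - int t) * w ^ j)"
  proof (rule sum.mono_neutral_right)
    show "\<forall>j\<in>{..<L} - (\<lambda>m. m + t) ` {..K}. g (int j - int t) * w ^ j = 0"
    proof
      fix j assume j: "j \<in> {..<L} - (\<lambda>m. m + t) ` {..K}"
      have "j < t \<or> j > t + K"
      proof (rule ccontr)
        assume "\<not> (j < t \<or> j > t + K)"
        then have "j = (j - t) + t" and "j - t \<in> {..K}" by auto
        with j show False by blast
      qed
      then show "g (int j - int t) * w ^ j = 0" using assms(1,2) by auto
    qed
  qed (use assms(3) in auto)
  also have "\<dots> = (\<Sum>m\<le>K. g (int m) * w ^ (m + t))"
    by (subst sum.reindex) (auto simp: inj_on_def)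
  finally show ?thesis by (simp add: sum_distrib_left power_add algebra_simps)
qed

lemma sum_lessThan_odd_even_split:
  fixes f :: "nat \<Rightarrow> 'a::comm_monoid_add"
  shows "(\<Sum>k<2 * M + 1. f k) = (\<Sum>m\<le>M. f (2 * m)) + (\<Sum>m<M. f (2 * m + 1))"
  by (induction M) (simp_all add: algebra_simps)

(* Entry (i, j), counted from 0, is r_(N-2j+i) in the 1-based indexing of the paper. *)
definition hurwitz_mat :: "nat \<Rightarrow> (int \<Rightarrow> 'a) \<Rightarrow> 'a mat" where
  "hurwitz_mat N r = mat N N (\<lambda>(i, j). r (int N - 2 * (int j + 1) + (int i + 1)))"

(* The odd relation is only needed multiplied by w: rows built from odd coefficients are shifted
   by at least one power of w.  This covers the real root y = 0, where only a_0 = 0 is known. *)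
lemma hurwitz_mat_row_kernel:
  fixes r :: "int \<Rightarrow> 'a::comm_ring_1"
  assumes r_neg: "\<And>k. k < 0 \<Longrightarrow> r k = 0" and r_big: "\<And>k. k > 2 * int n \<Longrightarrow> r k = 0"
    and even_part: "(\<Sum>m\<le>n. r (2 * int m) * w ^ m) = 0"
    and odd_part: "w * (\<Sum>m<n. r (2 * int m + 1) * w ^ m) = 0"
    and "i < 2 * n"
  shows "(\<Sum>j<2 * n. r (int i + 1 - 2 * int n + 2 * int j) * w ^ j) = 0"
proof (cases "even i")
  case True
  then obtain u where i: "i = 2 * u" by blast
  define t where "t = n - u"
  have t: "t \<ge> 1" "t \<le> n" using \<open>i < 2 * n\<close> i t_def by auto
  have "(\<Sum>j<2 * n. r (int i + 1 - 2 * int n + 2 * int j) * w ^ j)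
      = (\<Sum>j<2 * n. (\<lambda>k. r (2 * k + 1)) (int j - int t) * w ^ j)"
    using t by (intro sum.cong) (auto simp: i t_def algebra_simps)
  also have "\<dots> = w ^ t * (\<Sum>m\<le>n - 1. r (2 * int m + 1) * w ^ m)"
    by (rule sum_shifted_support) (use r_neg r_big t in auto)
  also have "\<dots> = w ^ (t - 1) * (w * (\<Sum>m<n. r (2 * int m + 1) * w ^ m))"
    using t by (simp add: power_eq_if lessThan_Suc_atMost[symmetric])
  finally show ?thesis using odd_part by simp
next
  case False
  then obtain u where i: "i = 2 * u + 1" using oddE by blast
  define t where "t = n - u - 1"
  have t: "t < n" using \<open>i < 2 * n\<close> i t_def by auto
  have "(\<Sum>j<2 * n. r (int i + 1 - 2 * int n + 2 * int j) * w ^ j)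
      = (\<Sum>j<2 * n. (\<lambda>k. r (2 * k)) (int j - int t) * w ^ j)"
    using \<open>i < 2 * n\<close> by (intro sum.cong) (auto simp: i t_def algebra_simps)
  also have "\<dots> = w ^ t * (\<Sum>m\<le>n. r (2 * int m) * w ^ m)"
    by (rule sum_shifted_support) (use r_neg r_big t in auto)
  finally show ?thesis using even_part by simp
qed

lemma det_hurwitz_mat_eq_0:
  fixes r :: "int \<Rightarrow> 'a::idom"
  assumes r_neg: "\<And>k. k < 0 \<Longrightarrow> r k = 0" and r_big: "\<And>k. k > 2 * int n \<Longrightarrow> r k = 0"
    and even_part: "(\<Sum>m\<le>n. r (2 * int m) * w ^ m) = 0"
    and odd_part: "w * (\<Sum>m<n. r (2 * int m + 1) * w ^ m) = 0"
    and "n \<ge> 1"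
  shows "det (hurwitz_mat (2 * n) r) = 0"
proof -
  let ?H = "hurwitz_mat (2 * n) r"
  define v where "v = vec (2 * n) (\<lambda>j. w ^ (2 * n - 1 - j))"
  have H: "?H \<in> carrier_mat (2 * n) (2 * n)" by (simp add: hurwitz_mat_def)
  have v: "v \<in> carrier_vec (2 * n)" by (simp add: v_def)
  have "v $ (2 * n - 1) = 1" using \<open>n \<ge> 1\<close> by (simp add: v_def)
  then have "v \<noteq> 0\<^sub>v (2 * n)" using \<open>n \<ge> 1\<close> by auto
  moreover have "?H *\<^sub>v v = 0\<^sub>v (2 * n)"
  proof (rule eq_vecI)
    fix i assume "i < dim_vec (0\<^sub>v (2 * n) :: 'a vec)"
    then have i: "i < 2 * n" by simp
    have "(?H *\<^sub>v v) $ i = (\<Sum>j<2 * n. r (int (2 * n) - 2 * (int j + 1) + (int i + 1)) * w ^ (2 * n - 1 - j))"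
      using i by (simp add: hurwitz_mat_def v_def scalar_prod_def lessThan_atLeast0)
    also have "\<dots> = (\<Sum>j<2 * n. r (int i + 1 - 2 * int n + 2 * int j) * w ^ j)"
      by (subst sum.nat_diff_reindex[symmetric]) (auto intro!: sum.cong simp: algebra_simps)
    also have "\<dots> = 0" by (rule hurwitz_mat_row_kernel[OF r_neg r_big even_part odd_part i])
    finally show "(?H *\<^sub>v v) $ i = 0\<^sub>v (2 * n) $ i" using i by simp
  qed (simp add: hurwitz_mat_def)
  ultimately show ?thesis using det_0_iff_vec_prod_zero[OF H] v by blast
qed

lemma det_hurwitz_mat_last_column:
  fixes r :: "int \<Rightarrow> 'a::comm_ring_1"
  assumes r_neg: "\<And>k. k < 0 \<Longrightarrow> r k = 0" and "N \<ge> 1"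
  shows "det (hurwitz_mat N r) = r 0 * det (mat_delete (hurwitz_mat N r) (N - 1) (N - 1))"
proof -
  let ?H = "hurwitz_mat N r"
  have H: "?H \<in> carrier_mat N N" by (simp add: hurwitz_mat_def)
  have last_col: "?H $$ (i, N - 1) = (if i = N - 1 then r 0 else 0)" if "i < N" for i
    using that \<open>N \<ge> 1\<close> r_neg by (auto simp: hurwitz_mat_def)
  have "det ?H = (\<Sum>i<N. ?H $$ (i, N - 1) * cofactor ?H i (N - 1))"
    using \<open>N \<ge> 1\<close> by (intro laplace_expansion_column[OF H]) auto
  also have "\<dots> = (\<Sum>i<N. if i = N - 1 then r 0 * cofactor ?H i (N - 1) else 0)"
    by (rule sum.cong) (use last_col in auto)
  also have "\<dots> = r 0 * cofactor ?H (N - 1) (N - 1)"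
    using \<open>N \<ge> 1\<close> by simp
  finally show ?thesis by (simp add: cofactor_def)
qed

lemma mat_delete_hurwitz_mat:
  "mat_delete (hurwitz_mat N r) (N - 1) (N - 1)
   = mat (N - 1) (N - 1) (\<lambda>(i, j). r (int N - 2 * (int j + 1) + (int i + 1)))"
  by (rule eq_matI) (auto simp: mat_delete_def hurwitz_mat_def)

lemma imaginary_root_even_odd_parts:
  fixes p :: "real poly" and y :: real
  assumes "degree p \<le> 2 * n" and "poly (map_poly complex_of_real p) (\<i> * of_real y) = 0"
  shows "(\<Sum>m\<le>n. coeff p (2 * m) * (- y\<^sup>2) ^ m) = 0"
    and "y * (\<Sum>m<n. coeff p (2 * m + 1) * (- y\<^sup>2) ^ m) = 0"
proof -
  let ?w = "- y\<^sup>2"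
  have even_power: "(\<i> * of_real y) ^ (2 * m) = complex_of_real (?w ^ m)" for m
    by (simp add: power_mult power_mult_distrib)
  have odd_power: "(\<i> * of_real y) ^ (2 * m + 1) = \<i> * of_real y * complex_of_real (?w ^ m)" for m
    by (simp add: even_power)
  have "0 = (\<Sum>k\<le>degree p. complex_of_real (coeff p k) * (\<i> * of_real y) ^ k)"
    using assms(2) by (simp add: poly_altdef coeff_map_poly degree_map_poly)
  also have "\<dots> = (\<Sum>k<2 * n + 1. complex_of_real (coeff p k) * (\<i> * of_real y) ^ k)"
    using assms(1) by (intro sum.mono_neutral_left) (auto simp: coeff_eq_0)
  also have "\<dots> = (\<Sum>m\<le>n. complex_of_real (coeff p (2 * m)) * (\<i> * of_real y) ^ (2 * m))
      + (\<Sum>m<n. complex_of_real (coeff p (2 * m + 1)) * (\<i> * of_real y) ^ (2 * m + 1))"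
    by (rule sum_lessThan_odd_even_split)
  also have "\<dots> = complex_of_real (\<Sum>m\<le>n. coeff p (2 * m) * ?w ^ m)
      + \<i> * complex_of_real (y * (\<Sum>m<n. coeff p (2 * m + 1) * ?w ^ m))"
    unfolding even_power odd_power by (simp add: sum_distrib_left mult_ac)
  finally show "(\<Sum>m\<le>n. coeff p (2 * m) * ?w ^ m) = 0"
    and "y * (\<Sum>m<n. coeff p (2 * m + 1) * ?w ^ m) = 0"
    by (simp_all add: complex_eq_iff)
qed

lemma coeff_Dpoly_shifted:
  "coeff (Dpoly n c \<circ>\<^sub>p [:-1/2, 1:]) k = a n c (int k)"
proof -
  let ?P = "\<Prod>j\<in>{1..2 * n}. [:- of_nat (j - 1), 1::real:]"
  have "degree ?P \<le> 2 * n"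
    using degree_prod_sum_le[of "{1..2 * n}" "\<lambda>j. [:- of_nat (j - 1), 1::real:]"] by simp
  then have "degree (?P \<circ>\<^sub>p [:-1/2, 1:]) \<le> 2 * n" by simp
  then have "q n k = 0" if "k > 2 * n" using that by (simp add: q_def coeff_eq_0)
  moreover have "Dpoly n c \<circ>\<^sub>p [:-1/2, 1:] = ?P \<circ>\<^sub>p [:-1/2, 1:] + [:(-1) ^ n * c:]"
    by (simp add: Dpoly_def pcompose_add)
  ultimately show ?thesis by (auto simp: a_def q_def coeff_pCons split: nat.split)
qed

lemma hurwitz_hurwitz_mat: "hurwitz n c = hurwitz_mat (2 * n) (a n c)"
  by (simp add: hurwitz_def hurwitz_mat_def)

lemma det_hurwitz_eq:
  assumes "n \<ge> 1"
  shows "det (hurwitz n c) = (q n 0 + (-1) ^ n * c) * h n c"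
proof -
  have "hurwitz n c = hurwitz_mat (2 * n) (a n c)" by (rule hurwitz_hurwitz_mat)
  moreover have "a n c k = 0" if "k < 0" for k using that by (simp add: a_def)
  moreover have "a n c 0 = q n 0 + (-1) ^ n * c" by (simp add: a_def)
  moreover have "h n c = det (mat_delete (hurwitz_mat (2 * n) (a n c)) (2 * n - 1) (2 * n - 1))"
    unfolding mat_delete_hurwitz_mat h_def by simp
  ultimately show ?thesis
    using det_hurwitz_mat_last_column[of "a n c" "2 * n"] assms by simp
qed

theorem lemma4p5:
  fixes n :: nat and c :: real and \<alpha> :: complex
  assumes "n \<ge> 1"
    and "poly (map_poly complex_of_real (Dpoly n c)) \<alpha> = 0"
    and "Re \<alpha> = -1/2"
  shows "det (hurwitz n c) = 0 \<and> (c = (-1)^(n-1) * q n 0 \<or> h n c = 0)"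
proof -
  let ?R = "Dpoly n c \<circ>\<^sub>p [:-1/2, 1:]"
  define y where "y = Im \<alpha>"
  have deg: "degree ?R \<le> 2 * n" using coeff_Dpoly_shifted[of n c] by (intro degree_le) (simp add: a_def)
  have root: "poly (map_poly complex_of_real ?R) (\<i> * of_real y) = 0"
  proof -
    have "\<i> * of_real y - 1/2 = \<alpha>" using assms(3) by (simp add: y_def complex_eq_iff)
    then show ?thesis using assms(2) by (simp add: of_real_hom.map_poly_pcompose poly_pcompose)
  qed
  note parts = imaginary_root_even_odd_parts[OF deg root, unfolded coeff_Dpoly_shifted]
  have even: "(\<Sum>m\<le>n. a n c (2 * int m) * (- y\<^sup>2) ^ m) = 0"
    and odd: "y * (\<Sum>m<n. a n c (2 * int m + 1) * (- y\<^sup>2) ^ m) = 0"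
    using parts by (simp_all add: ac_simps)
  have "det (hurwitz n c) = 0"
    unfolding hurwitz_hurwitz_mat
  proof (rule det_hurwitz_mat_eq_0[OF _ _ even _ assms(1)])
    show "- y\<^sup>2 * (\<Sum>m<n. a n c (2 * int m + 1) * (- y\<^sup>2) ^ m) = 0"
      using odd by (simp add: power2_eq_square)
  qed (simp_all add: a_def)
  moreover have "c = (-1) ^ (n - 1) * q n 0" if "q n 0 + (-1) ^ n * c = 0"
    using that assms(1) by (cases n) auto
  ultimately show ?thesis using det_hurwitz_eq[OF assms(1)] by auto
qed

end
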